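(* Let $\beta,\gamma>0$ with $m^{-\beta}(\log m)^\gamma\le1$. There is a constant $C>0$ independent of $m$, $t_0$, $t$ and of the initial condition such that for every solution $\theta(t)$ of the gradient flow, every $0\le t_0\le t$ such that $q_{\max}(s)\le m^{-\beta}(\log m)^\gamma$ for all $s\in[t_0,t]$, and every $i\in\{2,\dots,d\}$, $$\Big(\sum_{k=1}^m (w_k^i(t))^2\Big)^{1/2}\le\Big(\sum_{k=1}^m (w_k^i(t_0))^2\Big)^{1/2}+C\max\Big\{\frac{(\log m)^{3\gamma}}{m^{3\beta-\frac12}},\ \frac{(\log m)^{5\gamma}}{m^{5\beta-\frac32}}\Big\}(t-t_0).$$
   Context: Fix integers $d\ge2$, $m\ge2$. For $\theta=(a_k,w_k)_{k=1}^m$, $w_k=(w_k^1,\dots,w_k^d)^T$, let $f_\theta(x)=\sum_{k=1}^m a_k\sigma(w_k^Tx)$ and $R(\theta)=\tfrac12\int(f_\theta-f)^2\rho\,dx$, where $\rho$ is a compactly supported probability density on $\mathbb R^d$ with $\int x_i^2\rho=1$, $\int x_ix_j\rho=0$ ($i\ne j$); $f$ is bounded on $\mathrm{supp}\,\rho$ with $\int f(x)x\rho(x)dx=(1,0,\dots,0)^T$; $\sigma$ is three times differentiable with $\sigma(0)=0,\sigma'(0)=1,\sigma''(0)=0$, $|\sigma'''|\le C_{\rm L}$. The gradient flow is $\dot\theta=-\nabla_\theta R(\theta)$, and $q_{\max}(t)=\max_{k\in[m],i\in[d]}\{|a_k(t)|,|w_k^i(t)|\}$. $\log$ is natural. *)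

theory Defs
  imports "HOL-Analysis.Analysis"
begin

definition net :: "(real \<Rightarrow> real) \<Rightarrow> nat \<Rightarrow> (nat \<Rightarrow> real) \<Rightarrow> (nat \<Rightarrow> real^'d) \<Rightarrow> real^'d \<Rightarrow> real" where
  "net \<sigma> m a w x = (\<Sum>k<m. a k * \<sigma> (w k \<bullet> x))"

definition risk :: "(real \<Rightarrow> real) \<Rightarrow> (real^'d \<Rightarrow> real) \<Rightarrow> (real^'d \<Rightarrow> real) \<Rightarrow> nat
    \<Rightarrow> (nat \<Rightarrow> real) \<Rightarrow> (nat \<Rightarrow> real^'d) \<Rightarrow> real" where
  "risk \<sigma> f \<rho> m a w = (1/2) * integral\<^sup>L lborel (\<lambda>x. (net \<sigma> m a w x - f x)^2 * \<rho> x)"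

definition upd_comp :: "real^'d \<Rightarrow> 'd \<Rightarrow> real \<Rightarrow> real^'d" where
  "upd_comp v i c = (\<chi> j. if j = i then c else v $ j)"

definition grad_flow :: "(real \<Rightarrow> real) \<Rightarrow> (real^'d \<Rightarrow> real) \<Rightarrow> (real^'d \<Rightarrow> real) \<Rightarrow> nat
    \<Rightarrow> (real \<Rightarrow> nat \<Rightarrow> real) \<Rightarrow> (real \<Rightarrow> nat \<Rightarrow> real^'d) \<Rightarrow> bool" where
  "grad_flow \<sigma> f \<rho> m a w \<longleftrightarrow>
     (\<forall>s\<ge>0. \<forall>k<m.
        (\<exists>D. ((\<lambda>c. risk \<sigma> f \<rho> m ((a s)(k := c)) (w s)) has_real_derivative D) (at (a s k))
             \<and> ((\<lambda>\<tau>. a \<tau> k) has_real_derivative (- D)) (at s within {0..}))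
      \<and> (\<forall>i. \<exists>D. ((\<lambda>c. risk \<sigma> f \<rho> m (a s) ((w s)(k := upd_comp (w s k) i c))) has_real_derivative D)
                    (at (w s k $ i))
             \<and> ((\<lambda>\<tau>. w \<tau> k $ i) has_real_derivative (- D)) (at s within {0..})))"

definition qmax :: "nat \<Rightarrow> (nat \<Rightarrow> real) \<Rightarrow> (nat \<Rightarrow> real^'d::finite) \<Rightarrow> real" where
  "qmax m a w = Max ({\<bar>a k\<bar> | k. k < m} \<union> {\<bar>w k $ i\<bar> | k i. k < m})"

end

theory Submission
  imports Defs
begin

(* For a direction i other than j0 the target is uncorrelated with x_i. Since
   sigma z = z + O(z^3) and sigma' z = 1 + O(z^2), isotropy of rho turns the velocity of
   w_k^i into -a_k * (sum_l a_l w_l^i), up to an error of order m q^5 + q^3 when all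
   parameters are bounded by q <= 1. This rank-one part can only shrink the Euclidean
   norm of the vector (w_k^i)_k, so that norm grows at rate at most sqrt m times the
   error, which for q = m^-beta (log m)^gamma is the stated rate. *)

section \<open>Real-variable estimates\<close>

lemma DERIV_abs_increment_le:
  fixes g g' :: "real \<Rightarrow> real"
  assumes "\<And>y. (g has_real_derivative g' y) (at y)"
    and "\<And>y. \<bar>y - z\<bar> \<le> \<bar>t\<bar> \<Longrightarrow> \<bar>g' y\<bar> \<le> K"
  shows "\<bar>g (z + t) - g z\<bar> \<le> K * \<bar>t\<bar>"
  using field_differentiable_bound[of "cball z \<bar>t\<bar>" g g' K "z + t" z] assms
  by (auto simp: dist_real_def has_field_derivative_at_within)

lemma has_real_derivative_of_quadratic_remainder:
  fixes g :: "real \<Rightarrow> real"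
  assumes "\<And>h. \<bar>h\<bar> \<le> 1 \<Longrightarrow> \<bar>g (x + h) - g x - h * D\<bar> \<le> K * h\<^sup>2"
  shows "(g has_real_derivative D) (at x)"
proof -
  have "eventually (\<lambda>h. norm ((g (x + h) - g x) / h - D) \<le> \<bar>K\<bar> * \<bar>h\<bar>) (at 0)"
    unfolding eventually_at
  proof (intro exI[of _ 1] conjI ballI impI)
    fix h :: real assume h: "h \<noteq> 0 \<and> dist h 0 < 1"
    have "(g (x + h) - g x) / h - D = (g (x + h) - g x - h * D) / h"
      using h by (simp add: field_simps)
    also have "\<bar>\<dots>\<bar> \<le> K * h\<^sup>2 / \<bar>h\<bar>"
      using assms[of h] h by (simp add: divide_right_mono)
    also have "\<dots> = K * \<bar>h\<bar>"
      using h by (simp add: power2_eq_square divide_simps)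
    also have "\<dots> \<le> \<bar>K\<bar> * \<bar>h\<bar>"
      by (simp add: mult_right_mono)
    finally show "norm ((g (x + h) - g x) / h - D) \<le> \<bar>K\<bar> * \<bar>h\<bar>" by simp
  qed simp
  moreover have "((\<lambda>h. \<bar>K\<bar> * \<bar>h\<bar>) \<longlongrightarrow> 0) (at (0::real))"
    by (auto intro!: tendsto_eq_intros)
  ultimately have "((\<lambda>h. (g (x + h) - g x) / h - D) \<longlongrightarrow> 0) (at 0)"
    by (rule Lim_null_comparison)
  then show ?thesis
    unfolding DERIV_def by (simp add: LIM_zero_iff)
qed

lemma abs_mult_le: "\<bar>x\<bar> \<le> a \<Longrightarrow> \<bar>y\<bar> \<le> b \<Longrightarrow> \<bar>x * y\<bar> \<le> a * (b::real)"
  by (simp add: abs_mult mult_mono')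

lemma sqrt_growth_le_of_deriv_le:
  fixes N N' :: "real \<Rightarrow> real"
  assumes "t0 \<le> t" and "c \<ge> 0"
    and cont: "continuous_on {t0..t} N"
    and nonneg: "\<And>s. s \<in> {t0..t} \<Longrightarrow> N s \<ge> 0"
    and deriv: "\<And>s. t0 < s \<Longrightarrow> s < t \<Longrightarrow> (N has_real_derivative N' s) (at s)"
    and deriv_le: "\<And>s. t0 < s \<Longrightarrow> s < t \<Longrightarrow> N' s \<le> 2 * c * sqrt (N s)"
  shows "sqrt (N t) \<le> sqrt (N t0) + c * (t - t0)"
proof -
  (* sqrt is not differentiable at 0, so we argue with sqrt (N + delta) and let delta go to 0. *)
  have regularized: "sqrt (N t + \<delta>) - c * t \<le> sqrt (N t0 + \<delta>) - c * t0" if "\<delta> > 0" for \<delta>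
  proof (rule DERIV_nonpos_imp_decreasing_open[OF \<open>t0 \<le> t\<close>])
    fix s assume s: "t0 < s" "s < t"
    have pos: "N s + \<delta> > 0" using nonneg[of s] s \<open>\<delta> > 0\<close> by auto
    have "((\<lambda>s. sqrt (N s + \<delta>) - c * s) has_real_derivative
            N' s / (2 * sqrt (N s + \<delta>)) - c) (at s)"
      using deriv[OF s] pos by (auto intro!: derivative_eq_intros simp: field_simps)
    moreover have "N' s / (2 * sqrt (N s + \<delta>)) \<le> c"
    proof -
      have "N' s \<le> 2 * c * sqrt (N s + \<delta>)"
        using deriv_le[OF s] \<open>c \<ge> 0\<close> \<open>\<delta> > 0\<close> by (smt (verit) mult_left_mono real_sqrt_le_mono)
      then show ?thesis using pos by (simp add: field_simps)
    qed
    ultimately show "\<exists>y. ((\<lambda>s. sqrt (N s + \<delta>) - c * s) has_real_derivative y) (at s) \<and> y \<le> 0"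
      by force
  qed (intro continuous_intros cont)
  show ?thesis
  proof (rule field_le_epsilon)
    fix e :: real assume "e > 0"
    have "sqrt (N t) \<le> sqrt (N t + e\<^sup>2)" by simp
    also have "\<dots> \<le> sqrt (N t0 + e\<^sup>2) + c * (t - t0)"
      using regularized[of "e\<^sup>2"] \<open>e > 0\<close> by (simp add: algebra_simps)
    also have "\<dots> \<le> sqrt (N t0) + e + c * (t - t0)"
      using sqrt_add_le_add_sqrt[of "N t0" "e\<^sup>2"] nonneg[of t0] \<open>e > 0\<close> \<open>t0 \<le> t\<close> by simp
    finally show "sqrt (N t) \<le> sqrt (N t0) + c * (t - t0) + e" by simp
  qed
qed

lemma sqrt_sum_squares_growth_le:
  fixes v D A :: "real \<Rightarrow> nat \<Rightarrow> real"
  assumes "t0 \<le> t"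
    and deriv: "\<And>s k. s \<in> {t0..t} \<Longrightarrow> k < m \<Longrightarrow>
      ((\<lambda>\<tau>. v \<tau> k) has_real_derivative - D s k) (at s within {t0..t})"
    and near_rank_one: "\<And>s k. s \<in> {t0..t} \<Longrightarrow> k < m \<Longrightarrow>
      \<bar>D s k - A s k * (\<Sum>l<m. A s l * v s l)\<bar> \<le> \<epsilon>"
  shows "sqrt (\<Sum>k<m. (v t k)\<^sup>2) \<le> sqrt (\<Sum>k<m. (v t0 k)\<^sup>2) + sqrt (real m) * \<epsilon> * (t - t0)"
proof (cases "m = 0")
  case False
  define N where "N s = (\<Sum>k<m. (v s k)\<^sup>2)" for s
  have "\<epsilon> \<ge> 0" using near_rank_one[of t0 0] \<open>t0 \<le> t\<close> False by force
  have "sqrt (N t) \<le> sqrt (N t0) + (sqrt (real m) * \<epsilon>) * (t - t0)"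
  proof (rule sqrt_growth_le_of_deriv_le[OF \<open>t0 \<le> t\<close>])
    have "continuous_on {t0..t} (\<lambda>s. v s k)" if "k < m" for k
      unfolding continuous_on_eq_continuous_within using deriv[OF _ that] DERIV_continuous by blast
    then show "continuous_on {t0..t} N"
      unfolding N_def by (intro continuous_on_sum continuous_on_power) auto
    fix s assume s: "t0 < s" "s < t"
    then have interior: "at s within {t0..t} = at s"
      by (intro at_within_Icc_at) auto
    show "(N has_real_derivative (\<Sum>k<m. 2 * v s k * - D s k)) (at s)"
      unfolding N_def using deriv[of s] s interior
      by (auto intro!: derivative_eq_intros DERIV_sum)
    define S where "S = (\<Sum>l<m. A s l * v s l)"
    (* The rank-one part of the velocity only decreases the norm: its contribution
       to the derivative of the squared norm is -2 S^2. *)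
    have "(\<Sum>k<m. 2 * v s k * - D s k)
        = - 2 * S\<^sup>2 + (\<Sum>k<m. 2 * v s k * (A s k * S - D s k))"
      by (simp add: S_def power2_eq_square sum_distrib_left sum_distrib_right
          sum.distrib[symmetric] algebra_simps)
    also have "\<dots> \<le> (\<Sum>k<m. 2 * \<epsilon> * \<bar>v s k\<bar>)"
    proof -
      have "2 * v s k * (A s k * S - D s k) \<le> 2 * \<epsilon> * \<bar>v s k\<bar>" if "k < m" for k
      proof -
        have "\<bar>A s k * S - D s k\<bar> \<le> \<epsilon>"
          using near_rank_one[of s k] s that by (simp add: S_def abs_minus_commute)
        then have "v s k * (A s k * S - D s k) \<le> \<bar>v s k\<bar> * \<epsilon>"
          by (metis abs_ge_self abs_ge_zero abs_mult mult_left_mono order_trans)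
        then show ?thesis by (simp add: algebra_simps)
      qed
      then have "(\<Sum>k<m. 2 * v s k * (A s k * S - D s k)) \<le> (\<Sum>k<m. 2 * \<epsilon> * \<bar>v s k\<bar>)"
        by (intro sum_mono) auto
      then show ?thesis using zero_le_power2[of S] by linarith
    qed
    also have "\<dots> \<le> 2 * \<epsilon> * (sqrt (real m) * sqrt (N s))"
    proof -
      have "(\<Sum>k<m. 1 * \<bar>v s k\<bar>)\<^sup>2 \<le> (\<Sum>k<m. 1\<^sup>2) * (\<Sum>k<m. \<bar>v s k\<bar>\<^sup>2)"
        by (rule Cauchy_Schwarz_ineq_sum)
      then have "(\<Sum>k<m. \<bar>v s k\<bar>) \<le> sqrt (real m * N s)"
        by (intro real_le_rsqrt) (simp add: N_def)
      then show ?thesis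
        using \<open>\<epsilon> \<ge> 0\<close> by (simp add: real_sqrt_mult sum_distrib_left[symmetric] mult_left_mono)
    qed
    finally show "(\<Sum>k<m. 2 * v s k * - D s k) \<le> 2 * (sqrt (real m) * \<epsilon>) * sqrt (N s)"
      by (simp add: algebra_simps)
  qed (use \<open>\<epsilon> \<ge> 0\<close> in \<open>auto simp: N_def intro: sum_nonneg\<close>)
  then show ?thesis by (simp add: N_def)
qed simp

lemma sqrt_mult_rate_le_max:
  fixes x y \<beta> \<gamma> K :: real
  assumes "x > 0" and "y > 0" and "K \<ge> 0"
  defines "Q \<equiv> x powr (-\<beta>) * y powr \<gamma>"
  shows "sqrt x * (K * (x * Q^5 + Q^3))
    \<le> (2 * K + 1) * max (y powr (3*\<gamma>) / x powr (3*\<beta> - 1/2)) (y powr (5*\<gamma>) / x powr (5*\<beta> - 3/2))"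
proof -
  have pow: "Q^n = x powr (real n * -\<beta>) * y powr (real n * \<gamma>)" for n
    using assms by (simp add: Q_def power_mult_distrib powr_power)
  have e5: "1/2 + (1 + 5 * -\<beta>) = - (5*\<beta> - 3/2)" and e3: "1/2 + 3 * -\<beta> = - (3*\<beta> - 1/2)"
    by simp_all
  have "x powr (1/2) * (x powr 1 * x powr (5 * -\<beta>)) = 1 / x powr (5*\<beta> - 3/2)"
    unfolding powr_add[symmetric] e5 powr_minus_divide ..
  moreover have "x powr (1/2) * x powr (3 * -\<beta>) = 1 / x powr (3*\<beta> - 1/2)"
    unfolding powr_add[symmetric] e3 powr_minus_divide ..
  moreover have "sqrt x * (x * Q^5 + Q^3)
      = x powr (1/2) * (x powr 1 * x powr (5 * -\<beta>)) * y powr (5*\<gamma>)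
        + x powr (1/2) * x powr (3 * -\<beta>) * y powr (3*\<gamma>)"
    using assms unfolding pow by (simp add: powr_half_sqrt algebra_simps)
  ultimately have "sqrt x * (K * (x * Q^5 + Q^3))
      = K * (y powr (5*\<gamma>) / x powr (5*\<beta> - 3/2) + y powr (3*\<gamma>) / x powr (3*\<beta> - 1/2))"
    by simp
  also have "\<dots> \<le> K * (2 * max (y powr (3*\<gamma>) / x powr (3*\<beta> - 1/2)) (y powr (5*\<gamma>) / x powr (5*\<beta> - 3/2)))"
    using \<open>K \<ge> 0\<close> by (intro mult_left_mono) auto
  also have "\<dots> \<le> (2 * K + 1) * max (y powr (3*\<gamma>) / x powr (3*\<beta> - 1/2)) (y powr (5*\<gamma>) / x powr (5*\<beta> - 3/2))"
    by (simp add: algebra_simps max.coboundedI1)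
  finally show ?thesis .
qed

section \<open>Activations with bounded third derivative\<close>

locale activation =
  fixes \<sigma> \<sigma>1 \<sigma>2 \<sigma>3 :: "real \<Rightarrow> real" and CL :: real
  assumes deriv1: "\<And>z. (\<sigma> has_real_derivative \<sigma>1 z) (at z)"
    and deriv2: "\<And>z. (\<sigma>1 has_real_derivative \<sigma>2 z) (at z)"
    and deriv3: "\<And>z. (\<sigma>2 has_real_derivative \<sigma>3 z) (at z)"
    and at_zero: "\<sigma> 0 = 0" "\<sigma>1 0 = 1" "\<sigma>2 0 = 0"
    and third_deriv_bound: "\<And>z. \<bar>\<sigma>3 z\<bar> \<le> CL"
begin

lemma CL_nonneg: "CL \<ge> 0"
  using third_deriv_bound[of 0] by simp

lemma second_deriv_bound: "\<bar>y\<bar> \<le> U \<Longrightarrow> \<bar>\<sigma>2 y\<bar> \<le> CL * U"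
proof -
  assume y: "\<bar>y\<bar> \<le> U"
  have "\<bar>\<sigma>2 (0 + y) - \<sigma>2 0\<bar> \<le> CL * \<bar>y\<bar>"
    by (rule DERIV_abs_increment_le[OF deriv3 third_deriv_bound])
  also have "\<dots> \<le> CL * U"
    using y CL_nonneg by (rule mult_left_mono)
  finally show ?thesis using at_zero by simp
qed

lemma deriv_near_one: "\<bar>y\<bar> \<le> U \<Longrightarrow> \<bar>\<sigma>1 y - 1\<bar> \<le> CL * U\<^sup>2"
proof -
  assume y: "\<bar>y\<bar> \<le> U"
  have "\<bar>\<sigma>1 (0 + y) - \<sigma>1 0\<bar> \<le> CL * U * \<bar>y\<bar>"
    by (rule DERIV_abs_increment_le[OF deriv2], rule second_deriv_bound) (use y in linarith)
  also have "\<dots> \<le> CL * U * U"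
    using y CL_nonneg by (intro mult_left_mono) auto
  finally show ?thesis using at_zero by (simp add: power2_eq_square)
qed

lemma near_identity: "\<bar>y\<bar> \<le> U \<Longrightarrow> \<bar>\<sigma> y - y\<bar> \<le> CL * U^3"
proof -
  assume y: "\<bar>y\<bar> \<le> U"
  have "((\<lambda>y. \<sigma> y - y) has_real_derivative \<sigma>1 z - 1) (at z)" for z
    using deriv1 by (auto intro!: derivative_eq_intros)
  moreover have "\<bar>\<sigma>1 z - 1\<bar> \<le> CL * U\<^sup>2" if "\<bar>z - 0\<bar> \<le> \<bar>y\<bar>" for z
    using deriv_near_one that y by simp
  ultimately have "\<bar>(\<sigma> (0 + y) - (0 + y)) - (\<sigma> 0 - 0)\<bar> \<le> CL * U\<^sup>2 * \<bar>y\<bar>"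
    by (rule DERIV_abs_increment_le[of "\<lambda>y. \<sigma> y - y"])
  also have "\<dots> \<le> CL * U\<^sup>2 * U"
    using y CL_nonneg by (intro mult_left_mono) auto
  finally show ?thesis using at_zero by (simp add: power3_eq_cube power2_eq_square)
qed

lemma increment_bound:
  assumes "\<bar>z\<bar> \<le> U" and "\<bar>t\<bar> \<le> T"
  shows "\<bar>\<sigma> (z + t) - \<sigma> z\<bar> \<le> (1 + CL * (U + T)\<^sup>2) * \<bar>t\<bar>"
proof (rule DERIV_abs_increment_le[OF deriv1])
  fix y assume "\<bar>y - z\<bar> \<le> \<bar>t\<bar>"
  then have "\<bar>\<sigma>1 y - 1\<bar> \<le> CL * (U + T)\<^sup>2" using assms by (intro deriv_near_one) linarith
  then show "\<bar>\<sigma>1 y\<bar> \<le> 1 + CL * (U + T)\<^sup>2" by linarith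
qed

lemma taylor_bound:
  assumes "\<bar>z\<bar> \<le> U" and "\<bar>t\<bar> \<le> T"
  shows "\<bar>\<sigma> (z + t) - \<sigma> z - t * \<sigma>1 z\<bar> \<le> CL * (U + T) * t\<^sup>2"
proof -
  have "((\<lambda>y. \<sigma> y - y * \<sigma>1 z) has_real_derivative \<sigma>1 y - \<sigma>1 z) (at y)" for y
    using deriv1 by (auto intro!: derivative_eq_intros)
  moreover have "\<bar>\<sigma>1 y - \<sigma>1 z\<bar> \<le> CL * (U + T) * \<bar>t\<bar>" if y: "\<bar>y - z\<bar> \<le> \<bar>t\<bar>" for y
  proof -
    have "\<bar>\<sigma>1 (z + (y - z)) - \<sigma>1 z\<bar> \<le> CL * (U + T) * \<bar>y - z\<bar>"
      by (rule DERIV_abs_increment_le[OF deriv2 second_deriv_bound]) (use y assms in linarith)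
    also have "\<dots> \<le> CL * (U + T) * \<bar>t\<bar>"
      using y assms CL_nonneg by (intro mult_left_mono) auto
    finally show ?thesis by simp
  qed
  ultimately have "\<bar>(\<sigma> (z + t) - (z + t) * \<sigma>1 z) - (\<sigma> z - z * \<sigma>1 z)\<bar> \<le> CL * (U + T) * \<bar>t\<bar> * \<bar>t\<bar>"
    by (rule DERIV_abs_increment_le[of "\<lambda>y. \<sigma> y - y * \<sigma>1 z"])
  then show ?thesis by (simp add: algebra_simps power2_eq_square)
qed

lemma continuous_on_activation: "continuous_on UNIV \<sigma>" "continuous_on UNIV \<sigma>1"
  using deriv1 deriv2 by (auto intro!: continuous_at_imp_continuous_on DERIV_isCont)

lemma continuous_on_activation_compose [continuous_intros]:
  "continuous_on A g \<Longrightarrow> continuous_on A (\<lambda>x. \<sigma> (g x))"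
  "continuous_on A g \<Longrightarrow> continuous_on A (\<lambda>x. \<sigma>1 (g x))"
  using continuous_on_compose2[OF continuous_on_activation(1)] continuous_on_compose2[OF continuous_on_activation(2)]
  by auto

lemma borel_measurable_activation [measurable]: "\<sigma> \<in> borel_measurable borel" "\<sigma>1 \<in> borel_measurable borel"
  using continuous_on_activation by (auto intro: borel_measurable_continuous_onI)

lemma borel_measurable_net [measurable]: "(\<lambda>x. net \<sigma> m a W x) \<in> borel_measurable borel"
  unfolding net_def by (intro borel_measurable_continuous_onI continuous_intros)

lemma abs_net_le:
  assumes "\<And>l. l < m \<Longrightarrow> \<bar>a l\<bar> \<le> A" and "\<And>l. l < m \<Longrightarrow> \<bar>W l \<bullet> x\<bar> \<le> U"
  shows "\<bar>net \<sigma> m a W x\<bar> \<le> real m * (A * (U + CL * U^3))"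
proof -
  have "\<bar>net \<sigma> m a W x\<bar> \<le> (\<Sum>l<m. \<bar>a l * \<sigma> (W l \<bullet> x)\<bar>)"
    unfolding net_def by (rule sum_abs)
  also have "\<dots> \<le> (\<Sum>l<m. A * (U + CL * U^3))"
  proof (rule sum_mono)
    fix l assume "l \<in> {..<m}"
    then have "\<bar>\<sigma> (W l \<bullet> x)\<bar> \<le> U + CL * U^3"
      using near_identity[OF assms(2)] assms(2) by fastforce
    then show "\<bar>a l * \<sigma> (W l \<bullet> x)\<bar> \<le> A * (U + CL * U^3)"
      using assms(1) \<open>l \<in> {..<m}\<close> by (intro abs_mult_le) auto
  qed
  finally show ?thesis by simp
qed

end

section \<open>Integrals against a compactly supported density\<close>

locale prob_density =
  fixes \<rho> :: "'a::euclidean_space \<Rightarrow> real"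
  assumes density_measurable [measurable]: "\<rho> \<in> borel_measurable borel"
    and density_nonneg: "\<And>x. \<rho> x \<ge> 0"
    and density_integral: "integral\<^sup>L lborel \<rho> = 1"
begin

lemma density_integrable: "integrable lborel \<rho>"
  using density_integral not_integrable_integral_eq by fastforce

lemma support_nonempty: "\<exists>x. \<rho> x \<noteq> 0"
proof (rule ccontr)
  assume "\<nexists>x. \<rho> x \<noteq> 0"
  then have "\<rho> = (\<lambda>x. 0)" by auto
  then show False using density_integral by simp
qed

lemma abs_mult_density_le:
  assumes "\<And>x. \<rho> x \<noteq> 0 \<Longrightarrow> \<bar>g x\<bar> \<le> K"
  shows "\<bar>g x * \<rho> x\<bar> \<le> K * \<rho> x"
  using assms[of x] density_nonneg[of x] by (cases "\<rho> x = 0") (auto simp: abs_mult intro: mult_right_mono)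

lemma integrable_bounded_on_support:
  assumes "g \<in> borel_measurable borel" and "\<And>x. \<rho> x \<noteq> 0 \<Longrightarrow> \<bar>g x\<bar> \<le> K"
  shows "integrable lborel (\<lambda>x. g x * \<rho> x)"
proof (rule Bochner_Integration.integrable_bound)
  show "integrable lborel (\<lambda>x. K * \<rho> x)" using density_integrable by simp
  have "\<bar>g x * \<rho> x\<bar> \<le> K * \<rho> x" for x
    using abs_mult_density_le assms(2) by blast
  then show "AE x in lborel. norm (g x * \<rho> x) \<le> norm (K * \<rho> x)"
    by (intro AE_I2) (auto intro: order_trans[OF _ abs_ge_self])
qed (use assms(1) in measurable)

lemma abs_integral_bounded_on_support_le:
  assumes "g \<in> borel_measurable borel" and "\<And>x. \<rho> x \<noteq> 0 \<Longrightarrow> \<bar>g x\<bar> \<le> K"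
  shows "\<bar>integral\<^sup>L lborel (\<lambda>x. g x * \<rho> x)\<bar> \<le> K"
proof -
  have "norm (integral\<^sup>L lborel (\<lambda>x. g x * \<rho> x)) \<le> integral\<^sup>L lborel (\<lambda>x. K * \<rho> x)"
    using assms density_integrable abs_mult_density_le[of g K]
    by (intro Bochner_Integration.integral_norm_bound_integral integrable_bounded_on_support) auto
  then show ?thesis using density_integral by simp
qed

lemma has_real_derivative_half_square_integral:
  fixes E g :: "'a \<Rightarrow> real" and \<Delta> :: "real \<Rightarrow> 'a \<Rightarrow> real"
  assumes [measurable]: "E \<in> borel_measurable borel" "g \<in> borel_measurable borel"
      "\<And>h. \<Delta> h \<in> borel_measurable borel"
    and E_bound: "\<And>x. \<rho> x \<noteq> 0 \<Longrightarrow> \<bar>E x\<bar> \<le> ME"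
    and \<Delta>_zero: "\<And>x. \<Delta> 0 x = 0"
    and \<Delta>_lipschitz: "\<And>h x. \<rho> x \<noteq> 0 \<Longrightarrow> \<bar>h\<bar> \<le> 1 \<Longrightarrow> \<bar>\<Delta> h x\<bar> \<le> L * \<bar>h\<bar>"
    and \<Delta>_linear: "\<And>h x. \<rho> x \<noteq> 0 \<Longrightarrow> \<bar>h\<bar> \<le> 1 \<Longrightarrow> \<bar>\<Delta> h x - h * g x\<bar> \<le> K * h\<^sup>2"
  shows "((\<lambda>h. 1/2 * integral\<^sup>L lborel (\<lambda>x. (E x + \<Delta> h x)\<^sup>2 * \<rho> x))
           has_real_derivative integral\<^sup>L lborel (\<lambda>x. E x * g x * \<rho> x)) (at 0)"
proof (rule has_real_derivative_of_quadratic_remainder)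
  fix h :: real assume h: "\<bar>h\<bar> \<le> 1"
  have g_bound: "\<bar>g x\<bar> \<le> L + K" if "\<rho> x \<noteq> 0" for x
    using \<Delta>_lipschitz[OF that, of 1] \<Delta>_linear[OF that, of 1] by simp
  have sq_integrable: "integrable lborel (\<lambda>x. (E x + \<Delta> h x)\<^sup>2 * \<rho> x)" if "\<bar>h\<bar> \<le> 1" for h
  proof (rule integrable_bounded_on_support)
    show "\<bar>(E x + \<Delta> h x)\<^sup>2\<bar> \<le> (ME + L * \<bar>h\<bar>)\<^sup>2" if "\<rho> x \<noteq> 0" for x
      using E_bound[OF that] \<Delta>_lipschitz[OF that \<open>\<bar>h\<bar> \<le> 1\<close>]
      by (simp add: abs_le_square_iff[symmetric])
  qed measurable
  have lin_integrable: "integrable lborel (\<lambda>x. E x * g x * \<rho> x)"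
    using E_bound g_bound by (intro integrable_bounded_on_support) (auto intro: abs_mult_le)
  have remainder_eq: "1/2 * integral\<^sup>L lborel (\<lambda>x. (E x + \<Delta> (0 + h) x)\<^sup>2 * \<rho> x)
        - 1/2 * integral\<^sup>L lborel (\<lambda>x. (E x + \<Delta> 0 x)\<^sup>2 * \<rho> x)
        - h * integral\<^sup>L lborel (\<lambda>x. E x * g x * \<rho> x)
      = integral\<^sup>L lborel (\<lambda>x. (E x * (\<Delta> h x - h * g x) + (\<Delta> h x)\<^sup>2 / 2) * \<rho> x)"
    (is "?difference = ?remainder")
  proof -
    have "?remainder = integral\<^sup>L lborel (\<lambda>x. 1/2 * ((E x + \<Delta> (0 + h) x)\<^sup>2 * \<rho> x)
          - 1/2 * ((E x + \<Delta> 0 x)\<^sup>2 * \<rho> x) - h * (E x * g x * \<rho> x))"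
      by (rule Bochner_Integration.integral_cong) (simp_all add: \<Delta>_zero power2_eq_square algebra_simps)
    also have "\<dots> = ?difference"
      using sq_integrable[OF h] sq_integrable[of 0] lin_integrable by simp
    finally show ?thesis ..
  qed
  have "\<bar>integral\<^sup>L lborel (\<lambda>x. (E x * (\<Delta> h x - h * g x) + (\<Delta> h x)\<^sup>2 / 2) * \<rho> x)\<bar> \<le> (ME * K + L\<^sup>2 / 2) * h\<^sup>2"
  proof (rule abs_integral_bounded_on_support_le)
    fix x assume x: "\<rho> x \<noteq> 0"
    have "\<bar>E x * (\<Delta> h x - h * g x)\<bar> \<le> ME * (K * h\<^sup>2)"
      using E_bound[OF x] \<Delta>_linear[OF x h] by (rule abs_mult_le)
    moreover have "(\<Delta> h x)\<^sup>2 \<le> L\<^sup>2 * h\<^sup>2"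
      using power_mono[OF \<Delta>_lipschitz[OF x h] abs_ge_zero, of 2] by (simp add: power_mult_distrib)
    moreover have "(ME * K + L\<^sup>2 / 2) * h\<^sup>2 = ME * (K * h\<^sup>2) + L\<^sup>2 * h\<^sup>2 / 2"
      by (simp add: algebra_simps)
    ultimately show "\<bar>E x * (\<Delta> h x - h * g x) + (\<Delta> h x)\<^sup>2 / 2\<bar> \<le> (ME * K + L\<^sup>2 / 2) * h\<^sup>2"
      using zero_le_power2[of "\<Delta> h x"] by (simp only: abs_le_iff) linarith
  qed measurable
  then show "\<bar>?difference\<bar> \<le> (ME * K + L\<^sup>2 / 2) * h\<^sup>2"
    unfolding remainder_eq .
qed

end

section \<open>The gradient of the risk in a hidden weight\<close>

lemma inner_upd_comp: "upd_comp v i c \<bullet> x = v \<bullet> x + (c - v $ i) * x $ i"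
proof -
  have "(if j = i then c else v $ j) * x $ j = v $ j * x $ j + (if j = i then (c - v $ i) * x $ i else 0)" for j
    by (simp add: algebra_simps)
  then show ?thesis
    by (simp add: inner_vec_def upd_comp_def sum.distrib)
qed

lemma net_fun_upd:
  assumes "k < m"
  shows "net \<sigma> m a (W(k := V)) x = net \<sigma> m a W x + a k * (\<sigma> (V \<bullet> x) - \<sigma> (W k \<bullet> x))"
proof -
  have "a l * \<sigma> ((W(k := V)) l \<bullet> x)
      = a l * \<sigma> (W l \<bullet> x) + (if l = k then a k * (\<sigma> (V \<bullet> x) - \<sigma> (W k \<bullet> x)) else 0)" for l
    by (simp add: algebra_simps)
  then show ?thesis using assms by (simp add: net_def sum.distrib)
qed

lemma abs_le_qmax:
  fixes w :: "nat \<Rightarrow> real^'d"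
  assumes "k < m"
  shows "\<bar>a k\<bar> \<le> qmax m a w" and "\<bar>w k $ j\<bar> \<le> qmax m a w"
proof -
  let ?S = "{\<bar>a k\<bar> | k. k < m} \<union> {\<bar>w k $ i\<bar> | k i. k < m}"
  have "{\<bar>a k\<bar> | k. k < m} = (\<lambda>k. \<bar>a k\<bar>) ` {..<m}"
    and "{\<bar>w k $ i\<bar> | k i. k < m} = (\<lambda>(k, i). \<bar>w k $ i\<bar>) ` ({..<m} \<times> UNIV)"
    by auto
  then have "finite ?S" by simp
  moreover have "\<bar>a k\<bar> \<in> ?S" and "\<bar>w k $ j\<bar> \<in> ?S" using assms by blast+
  ultimately show "\<bar>a k\<bar> \<le> qmax m a w" and "\<bar>w k $ j\<bar> \<le> qmax m a w"
    unfolding qmax_def by (simp_all add: Max_ge)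
qed

definition risk_weight_gradient ::
    "(real \<Rightarrow> real) \<Rightarrow> (real \<Rightarrow> real) \<Rightarrow> (real^'d \<Rightarrow> real) \<Rightarrow> (real^'d \<Rightarrow> real) \<Rightarrow> nat
      \<Rightarrow> (nat \<Rightarrow> real) \<Rightarrow> (nat \<Rightarrow> real^'d) \<Rightarrow> nat \<Rightarrow> 'd \<Rightarrow> real" where
  "risk_weight_gradient \<sigma> \<sigma>1 f \<rho> m a W k i =
     integral\<^sup>L lborel (\<lambda>x. (net \<sigma> m a W x - f x) * (a k * \<sigma>1 (W k \<bullet> x) * x $ i) * \<rho> x)"

locale risk_model = activation \<sigma> \<sigma>1 \<sigma>2 \<sigma>3 CL + prob_density \<rho>
  for \<sigma> \<sigma>1 \<sigma>2 \<sigma>3 :: "real \<Rightarrow> real" and CL :: real and \<rho> :: "real^'d \<Rightarrow> real" +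
  fixes f :: "real^'d \<Rightarrow> real" and j0 :: 'd and B M :: real
  assumes support_radius: "\<And>x. \<rho> x \<noteq> 0 \<Longrightarrow> norm x \<le> B"
    and target_bound: "\<And>x. \<rho> x \<noteq> 0 \<Longrightarrow> \<bar>f x\<bar> \<le> M"
    and target_measurable [measurable]: "f \<in> borel_measurable borel"
    and second_moments_integrable: "\<And>i j. integrable lborel (\<lambda>x. x $ i * x $ j * \<rho> x)"
    and second_moments: "\<And>i j. integral\<^sup>L lborel (\<lambda>x. x $ i * x $ j * \<rho> x) = (if i = j then 1 else 0)"
    and target_correlation: "\<And>j. integral\<^sup>L lborel (\<lambda>x. f x * x $ j * \<rho> x) = (if j = j0 then 1 else 0)"
begin

lemma radius_nonneg: "B \<ge> 0" and target_bound_nonneg: "M \<ge> 0"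
  using support_nonempty support_radius target_bound
  by (auto intro: order_trans[OF norm_ge_zero] order_trans[OF abs_ge_zero])

lemma abs_coord_le: "\<rho> x \<noteq> 0 \<Longrightarrow> \<bar>x $ i\<bar> \<le> B"
  using support_radius component_le_norm_cart order_trans by blast

lemma abs_inner_le: "\<rho> x \<noteq> 0 \<Longrightarrow> \<bar>v \<bullet> x\<bar> \<le> norm v * B"
  using Cauchy_Schwarz_ineq2[of v x] support_radius[of x]
  by (meson mult_left_mono norm_ge_zero order_trans)

lemma net_bounded_on_support:
  obtains N where "\<And>x. \<rho> x \<noteq> 0 \<Longrightarrow> \<bar>net \<sigma> m a W x\<bar> \<le> N"
proof -
  have "bounded ((\<lambda>x. net \<sigma> m a W x) ` cball 0 B)"
    unfolding net_def by (intro compact_imp_bounded compact_continuous_image compact_cball continuous_intros)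
  then obtain N where "\<forall>x\<in>cball 0 B. \<bar>net \<sigma> m a W x\<bar> \<le> N"
    unfolding bounded_iff by auto
  then have "\<rho> x \<noteq> 0 \<Longrightarrow> \<bar>net \<sigma> m a W x\<bar> \<le> N" for x
    using support_radius by simp
  then show thesis by (rule that)
qed

lemma activation_perturbation_bounds:
  assumes x: "\<rho> x \<noteq> 0" and h: "\<bar>h\<bar> \<le> 1"
  shows "\<bar>\<sigma> (v \<bullet> x + h * x $ i) - \<sigma> (v \<bullet> x)\<bar> \<le> (1 + CL * (norm v * B + B)\<^sup>2) * B * \<bar>h\<bar>"
    and "\<bar>\<sigma> (v \<bullet> x + h * x $ i) - \<sigma> (v \<bullet> x) - h * x $ i * \<sigma>1 (v \<bullet> x)\<bar>
           \<le> CL * (norm v * B + B) * B\<^sup>2 * h\<^sup>2"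
proof -
  have t: "\<bar>h * x $ i\<bar> \<le> B * \<bar>h\<bar>"
    using mult_left_mono[OF abs_coord_le[OF x, of i] abs_ge_zero[of h]] by (simp add: abs_mult mult.commute)
  moreover have "B * \<bar>h\<bar> \<le> B" using h radius_nonneg by (simp add: mult_left_le)
  ultimately have tB: "\<bar>h * x $ i\<bar> \<le> B" by linarith
  have "\<bar>\<sigma> (v \<bullet> x + h * x $ i) - \<sigma> (v \<bullet> x)\<bar> \<le> (1 + CL * (norm v * B + B)\<^sup>2) * \<bar>h * x $ i\<bar>"
    using abs_inner_le[OF x] tB by (rule increment_bound)
  also have "\<dots> \<le> (1 + CL * (norm v * B + B)\<^sup>2) * (B * \<bar>h\<bar>)"
    using t CL_nonneg by (intro mult_left_mono) auto
  finally show "\<bar>\<sigma> (v \<bullet> x + h * x $ i) - \<sigma> (v \<bullet> x)\<bar> \<le> (1 + CL * (norm v * B + B)\<^sup>2) * B * \<bar>h\<bar>"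
    by (simp add: mult.assoc)
  have "\<bar>\<sigma> (v \<bullet> x + h * x $ i) - \<sigma> (v \<bullet> x) - h * x $ i * \<sigma>1 (v \<bullet> x)\<bar>
      \<le> CL * (norm v * B + B) * (h * x $ i)\<^sup>2"
    using abs_inner_le[OF x] tB by (rule taylor_bound)
  also have "\<dots> \<le> CL * (norm v * B + B) * (B * \<bar>h\<bar>)\<^sup>2"
    using power_mono[OF t abs_ge_zero, of 2] CL_nonneg radius_nonneg by (intro mult_left_mono) auto
  finally show "\<bar>\<sigma> (v \<bullet> x + h * x $ i) - \<sigma> (v \<bullet> x) - h * x $ i * \<sigma>1 (v \<bullet> x)\<bar>
      \<le> CL * (norm v * B + B) * B\<^sup>2 * h\<^sup>2"
    by (simp add: power_mult_distrib)
qed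

lemma risk_has_weight_derivative:
  assumes k: "k < m"
  shows "((\<lambda>c. risk \<sigma> f \<rho> m a (W(k := upd_comp (W k) i c)))
           has_real_derivative risk_weight_gradient \<sigma> \<sigma>1 f \<rho> m a W k i) (at (W k $ i))"
proof -
  define \<Delta> where "\<Delta> h x = a k * (\<sigma> (W k \<bullet> x + h * x $ i) - \<sigma> (W k \<bullet> x))" for h x
  obtain N where N: "\<And>x. \<rho> x \<noteq> 0 \<Longrightarrow> \<bar>net \<sigma> m a W x\<bar> \<le> N"
    using net_bounded_on_support by blast
  have "((\<lambda>h. 1/2 * integral\<^sup>L lborel (\<lambda>x. (net \<sigma> m a W x - f x + \<Delta> h x)\<^sup>2 * \<rho> x))
          has_real_derivative risk_weight_gradient \<sigma> \<sigma>1 f \<rho> m a W k i) (at 0)"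
    unfolding risk_weight_gradient_def
  proof (rule has_real_derivative_half_square_integral)
    show "(\<lambda>x. net \<sigma> m a W x - f x) \<in> borel_measurable borel"
      and "(\<lambda>x. a k * \<sigma>1 (W k \<bullet> x) * x $ i) \<in> borel_measurable borel"
      and "\<And>h. \<Delta> h \<in> borel_measurable borel"
      unfolding \<Delta>_def by measurable
    show "\<Delta> 0 x = 0" for x by (simp add: \<Delta>_def)
    show "\<bar>net \<sigma> m a W x - f x\<bar> \<le> N + M" if "\<rho> x \<noteq> 0" for x
      using N[OF that] target_bound[OF that] by linarith
    fix h :: real and x assume x: "\<rho> x \<noteq> 0" and h: "\<bar>h\<bar> \<le> 1"
    show "\<bar>\<Delta> h x\<bar> \<le> \<bar>a k\<bar> * ((1 + CL * (norm (W k) * B + B)\<^sup>2) * B) * \<bar>h\<bar>"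
      using mult_left_mono[OF activation_perturbation_bounds(1)[OF x h] abs_ge_zero]
      by (simp add: \<Delta>_def abs_mult mult.assoc)
    have "\<Delta> h x - h * (a k * \<sigma>1 (W k \<bullet> x) * x $ i)
        = a k * (\<sigma> (W k \<bullet> x + h * x $ i) - \<sigma> (W k \<bullet> x) - h * x $ i * \<sigma>1 (W k \<bullet> x))"
      by (simp add: \<Delta>_def algebra_simps)
    then show "\<bar>\<Delta> h x - h * (a k * \<sigma>1 (W k \<bullet> x) * x $ i)\<bar>
        \<le> \<bar>a k\<bar> * (CL * (norm (W k) * B + B) * B\<^sup>2) * h\<^sup>2"
      using mult_left_mono[OF activation_perturbation_bounds(2)[OF x h] abs_ge_zero]
      by (simp add: abs_mult mult.assoc)
  qed
  moreover have "(\<lambda>h. risk \<sigma> f \<rho> m a (W(k := upd_comp (W k) i (h + W k $ i))))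
      = (\<lambda>h. 1/2 * integral\<^sup>L lborel (\<lambda>x. (net \<sigma> m a W x - f x + \<Delta> h x)\<^sup>2 * \<rho> x))"
    by (simp add: fun_eq_iff risk_def net_fun_upd[OF k] inner_upd_comp \<Delta>_def algebra_simps)
  ultimately have "((\<lambda>h. risk \<sigma> f \<rho> m a (W(k := upd_comp (W k) i (h + W k $ i))))
      has_real_derivative risk_weight_gradient \<sigma> \<sigma>1 f \<rho> m a W k i) (at 0)"
    by simp
  then show ?thesis
    using DERIV_shift[where x = 0 and z = "W k $ i"] by simp
qed

lemma inner_mult_coord_eq:
  "(\<lambda>x. (v \<bullet> x) * x $ i * \<rho> x) = (\<lambda>x. \<Sum>j\<in>UNIV. v $ j * (x $ j * x $ i * \<rho> x))"
  by (simp add: inner_vec_def sum_distrib_left sum_distrib_right algebra_simps)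

lemma integrable_inner_mult_coord: "integrable lborel (\<lambda>x. (v \<bullet> x) * x $ i * \<rho> x)"
  unfolding inner_mult_coord_eq using second_moments_integrable by simp

lemma integral_inner_mult_coord: "integral\<^sup>L lborel (\<lambda>x. (v \<bullet> x) * x $ i * \<rho> x) = v $ i"
  unfolding inner_mult_coord_eq using second_moments_integrable
  by (simp add: second_moments if_distrib cong: if_cong)

lemma activation_moment:
  assumes "\<And>x. \<rho> x \<noteq> 0 \<Longrightarrow> \<bar>v \<bullet> x\<bar> \<le> U"
  shows integrable_activation_moment: "integrable lborel (\<lambda>x. \<sigma> (v \<bullet> x) * x $ i * \<rho> x)"
    and abs_activation_moment_sub_le:
      "\<bar>integral\<^sup>L lborel (\<lambda>x. \<sigma> (v \<bullet> x) * x $ i * \<rho> x) - v $ i\<bar> \<le> CL * U^3 * B"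
proof -
  define R where "R x = (\<sigma> (v \<bullet> x) - v \<bullet> x) * x $ i" for x
  have R_bound: "\<bar>R x\<bar> \<le> CL * U^3 * B" if "\<rho> x \<noteq> 0" for x
    unfolding R_def using near_identity[OF assms[OF that]] abs_coord_le[OF that] by (rule abs_mult_le)
  have R_integrable: "integrable lborel (\<lambda>x. R x * \<rho> x)"
    using R_bound by (intro integrable_bounded_on_support) (auto simp: R_def)
  have split: "(\<lambda>x. \<sigma> (v \<bullet> x) * x $ i * \<rho> x) = (\<lambda>x. (v \<bullet> x) * x $ i * \<rho> x + R x * \<rho> x)"
    by (auto simp: R_def algebra_simps)
  show "integrable lborel (\<lambda>x. \<sigma> (v \<bullet> x) * x $ i * \<rho> x)"
    unfolding split using integrable_inner_mult_coord R_integrable by simp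
  have "integral\<^sup>L lborel (\<lambda>x. \<sigma> (v \<bullet> x) * x $ i * \<rho> x) - v $ i = integral\<^sup>L lborel (\<lambda>x. R x * \<rho> x)"
    unfolding split using integrable_inner_mult_coord R_integrable integral_inner_mult_coord by simp
  also have "\<bar>\<dots>\<bar> \<le> CL * U^3 * B"
    using R_bound by (intro abs_integral_bounded_on_support_le) (auto simp: R_def)
  finally show "\<bar>integral\<^sup>L lborel (\<lambda>x. \<sigma> (v \<bullet> x) * x $ i * \<rho> x) - v $ i\<bar> \<le> CL * U^3 * B" .
qed

lemma abs_net_moment_sub_le:
  assumes A: "\<And>l. l < m \<Longrightarrow> \<bar>a l\<bar> \<le> A"
    and U: "\<And>l x. l < m \<Longrightarrow> \<rho> x \<noteq> 0 \<Longrightarrow> \<bar>W l \<bullet> x\<bar> \<le> U"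
  shows "\<bar>integral\<^sup>L lborel (\<lambda>x. net \<sigma> m a W x * x $ i * \<rho> x) - (\<Sum>l<m. a l * W l $ i)\<bar>
    \<le> real m * (A * (CL * U^3 * B))"
proof -
  have moment_integrable: "integrable lborel (\<lambda>x. \<sigma> (W l \<bullet> x) * x $ i * \<rho> x)" if "l < m" for l
    using U[OF that] by (rule integrable_activation_moment)
  have moment_bound: "\<bar>integral\<^sup>L lborel (\<lambda>x. \<sigma> (W l \<bullet> x) * x $ i * \<rho> x) - W l $ i\<bar> \<le> CL * U^3 * B"
    if "l < m" for l
    using U[OF that] by (rule abs_activation_moment_sub_le)
  have "(\<lambda>x. net \<sigma> m a W x * x $ i * \<rho> x) = (\<lambda>x. \<Sum>l<m. a l * (\<sigma> (W l \<bullet> x) * x $ i * \<rho> x))"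
    by (simp add: net_def sum_distrib_left sum_distrib_right algebra_simps)
  then have "integral\<^sup>L lborel (\<lambda>x. net \<sigma> m a W x * x $ i * \<rho> x) - (\<Sum>l<m. a l * W l $ i)
      = (\<Sum>l<m. a l * (integral\<^sup>L lborel (\<lambda>x. \<sigma> (W l \<bullet> x) * x $ i * \<rho> x) - W l $ i))"
    using moment_integrable by (simp add: sum_subtractf right_diff_distrib)
  also have "\<bar>\<dots>\<bar> \<le> (\<Sum>l<m. A * (CL * U^3 * B))"
    using A moment_bound by (intro order_trans[OF sum_abs] sum_mono abs_mult_le) auto
  finally show ?thesis by simp
qed

lemma risk_weight_gradient_eq:
  assumes "i \<noteq> j0"
  shows "risk_weight_gradient \<sigma> \<sigma>1 f \<rho> m a W k i
    = a k * (integral\<^sup>L lborel (\<lambda>x. net \<sigma> m a W x * x $ i * \<rho> x)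
        + integral\<^sup>L lborel (\<lambda>x. (net \<sigma> m a W x - f x) * (\<sigma>1 (W k \<bullet> x) - 1) * x $ i * \<rho> x))"
proof -
  obtain N where N: "\<And>x. \<rho> x \<noteq> 0 \<Longrightarrow> \<bar>net \<sigma> m a W x\<bar> \<le> N"
    using net_bounded_on_support by blast
  have "integrable lborel (\<lambda>x. net \<sigma> m a W x * x $ i * \<rho> x)"
    using N abs_coord_le by (intro integrable_bounded_on_support[where K = "N * B"]) (auto intro: abs_mult_le)
  moreover have "integrable lborel (\<lambda>x. f x * x $ i * \<rho> x)"
    using target_bound abs_coord_le by (intro integrable_bounded_on_support[where K = "M * B"]) (auto intro: abs_mult_le)
  moreover have "integrable lborel (\<lambda>x. (net \<sigma> m a W x - f x) * (\<sigma>1 (W k \<bullet> x) - 1) * x $ i * \<rho> x)"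
  proof (rule integrable_bounded_on_support)
    fix x assume x: "\<rho> x \<noteq> 0"
    have "\<bar>net \<sigma> m a W x - f x\<bar> \<le> N + M" using N[OF x] target_bound[OF x] by linarith
    then show "\<bar>(net \<sigma> m a W x - f x) * (\<sigma>1 (W k \<bullet> x) - 1) * x $ i\<bar> \<le> (N + M) * (CL * (norm (W k) * B)\<^sup>2) * B"
      using deriv_near_one[OF abs_inner_le[OF x]] abs_coord_le[OF x] by (intro abs_mult_le)
  qed measurable
  moreover have "(\<lambda>x. (net \<sigma> m a W x - f x) * (a k * \<sigma>1 (W k \<bullet> x) * x $ i) * \<rho> x)
      = (\<lambda>x. a k * (net \<sigma> m a W x * x $ i * \<rho> x - f x * x $ i * \<rho> x
          + (net \<sigma> m a W x - f x) * (\<sigma>1 (W k \<bullet> x) - 1) * x $ i * \<rho> x))"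
    by (simp add: algebra_simps)
  ultimately show ?thesis
    using target_correlation[of i] assms by (simp add: risk_weight_gradient_def)
qed

lemma abs_risk_weight_gradient_sub_le:
  assumes k: "k < m" and i: "i \<noteq> j0"
    and A: "\<And>l. l < m \<Longrightarrow> \<bar>a l\<bar> \<le> A"
    and U: "\<And>l x. l < m \<Longrightarrow> \<rho> x \<noteq> 0 \<Longrightarrow> \<bar>W l \<bullet> x\<bar> \<le> U"
  shows "\<bar>risk_weight_gradient \<sigma> \<sigma>1 f \<rho> m a W k i - a k * (\<Sum>l<m. a l * W l $ i)\<bar>
    \<le> A * (real m * (A * (CL * U^3 * B)) + (real m * (A * (U + CL * U^3)) + M) * (CL * U\<^sup>2) * B)"
proof -
  have "\<bar>integral\<^sup>L lborel (\<lambda>x. (net \<sigma> m a W x - f x) * (\<sigma>1 (W k \<bullet> x) - 1) * x $ i * \<rho> x)\<bar>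
      \<le> (real m * (A * (U + CL * U^3)) + M) * (CL * U\<^sup>2) * B"
  proof (rule abs_integral_bounded_on_support_le)
    fix x assume x: "\<rho> x \<noteq> 0"
    have "\<bar>net \<sigma> m a W x\<bar> \<le> real m * (A * (U + CL * U^3))"
      using A U[OF _ x] by (rule abs_net_le)
    then have "\<bar>net \<sigma> m a W x - f x\<bar> \<le> real m * (A * (U + CL * U^3)) + M"
      using target_bound[OF x] by linarith
    then show "\<bar>(net \<sigma> m a W x - f x) * (\<sigma>1 (W k \<bullet> x) - 1) * x $ i\<bar>
        \<le> (real m * (A * (U + CL * U^3)) + M) * (CL * U\<^sup>2) * B"
      using deriv_near_one[OF U[OF k x]] abs_coord_le[OF x] by (intro abs_mult_le)
  qed measurable
  moreover have "risk_weight_gradient \<sigma> \<sigma>1 f \<rho> m a W k i - a k * (\<Sum>l<m. a l * W l $ i)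
      = a k * ((integral\<^sup>L lborel (\<lambda>x. net \<sigma> m a W x * x $ i * \<rho> x) - (\<Sum>l<m. a l * W l $ i))
          + integral\<^sup>L lborel (\<lambda>x. (net \<sigma> m a W x - f x) * (\<sigma>1 (W k \<bullet> x) - 1) * x $ i * \<rho> x))"
    unfolding risk_weight_gradient_eq[OF i] by (simp add: algebra_simps)
  moreover have "\<bar>integral\<^sup>L lborel (\<lambda>x. net \<sigma> m a W x * x $ i * \<rho> x) - (\<Sum>l<m. a l * W l $ i)\<bar>
      \<le> real m * (A * (CL * U^3 * B))"
    using A U by (rule abs_net_moment_sub_le)
  ultimately show ?thesis
    using A[OF k] by (simp only:) (intro abs_mult_le order_trans[OF abs_triangle_ineq add_mono])
qed

lemma abs_inner_le_of_coords:
  assumes "\<rho> x \<noteq> 0" and "\<And>j. \<bar>v $ j\<bar> \<le> Q"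
  shows "\<bar>v \<bullet> x\<bar> \<le> real CARD('d) * B * Q"
proof -
  have "norm v \<le> real CARD('d) * Q"
    using norm_le_l1_cart[of v] sum_bounded_above[of UNIV "\<lambda>j. \<bar>v $ j\<bar>" Q] assms(2) by force
  then show ?thesis
    using abs_inner_le[OF assms(1), of v] radius_nonneg
    by (smt (verit, ccfv_SIG) mult.commute mult_left_mono mult.assoc)
qed

definition deviation_constant :: real where
  "deviation_constant = CL * (CARD('d) * B)\<^sup>2 * B * (2 * (CARD('d) * B) + CL * (CARD('d) * B)^3 + M)"

lemma deviation_constant_nonneg: "deviation_constant \<ge> 0"
  using radius_nonneg CL_nonneg target_bound_nonneg by (simp add: deviation_constant_def)

lemma abs_risk_weight_gradient_sub_le_powers:
  assumes k: "k < m" and i: "i \<noteq> j0" and Q: "0 \<le> Q" "Q \<le> 1"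
    and aQ: "\<And>l. l < m \<Longrightarrow> \<bar>a l\<bar> \<le> Q" and WQ: "\<And>l j. l < m \<Longrightarrow> \<bar>W l $ j\<bar> \<le> Q"
  shows "\<bar>risk_weight_gradient \<sigma> \<sigma>1 f \<rho> m a W k i - a k * (\<Sum>l<m. a l * W l $ i)\<bar>
    \<le> deviation_constant * (real m * Q^5 + Q^3)"
proof -
  define b where "b = real CARD('d) * B"
  have b: "b \<ge> 0" using radius_nonneg by (simp add: b_def)
  have WU: "\<bar>W l \<bullet> x\<bar> \<le> b * Q" if "l < m" and "\<rho> x \<noteq> 0" for l x
    unfolding b_def using that(2) WQ[OF that(1)] by (rule abs_inner_le_of_coords)
  have "\<bar>risk_weight_gradient \<sigma> \<sigma>1 f \<rho> m a W k i - a k * (\<Sum>l<m. a l * W l $ i)\<bar>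
      \<le> Q * (real m * (Q * (CL * (b * Q)^3 * B)) + (real m * (Q * (b * Q + CL * (b * Q)^3)) + M) * (CL * (b * Q)\<^sup>2) * B)"
    by (intro abs_risk_weight_gradient_sub_le k i aQ WU)
  also have "\<dots> = real m * Q^5 * (CL * b\<^sup>2 * B * (2 * b)) + real m * Q^7 * (CL\<^sup>2 * b^5 * B)
      + Q^3 * (M * CL * b\<^sup>2 * B)"
    by (simp add: power2_eq_square power3_eq_cube numeral_eq_Suc algebra_simps)
  also have "\<dots> \<le> deviation_constant * (real m * Q^5 + Q^3)"
  proof -
    have "Q^7 \<le> Q^5" using Q by (simp add: power_decreasing)
    then have "real m * Q^7 * (CL\<^sup>2 * b^5 * B) \<le> real m * Q^5 * (CL\<^sup>2 * b^5 * B)"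
      using b radius_nonneg by (intro mult_right_mono mult_left_mono) auto
    moreover have "0 \<le> real m * Q^5 * (CL * b\<^sup>2 * B * M) + Q^3 * (CL * b\<^sup>2 * B * (2 * b + CL * b^3))"
      using b Q radius_nonneg CL_nonneg target_bound_nonneg by simp
    ultimately show ?thesis
      unfolding deviation_constant_def b_def[symmetric]
      by (simp add: algebra_simps power2_eq_square power3_eq_cube numeral_eq_Suc)
  qed
  finally show ?thesis .
qed

lemma grad_flow_has_weight_derivative:
  assumes "grad_flow \<sigma> f \<rho> m a w" and "s \<ge> 0" and "k < m"
  shows "((\<lambda>\<tau>. w \<tau> k $ i) has_real_derivative - risk_weight_gradient \<sigma> \<sigma>1 f \<rho> m (a s) (w s) k i)
           (at s within {0..})"
proof -
  obtain D where D: "((\<lambda>c. risk \<sigma> f \<rho> m (a s) ((w s)(k := upd_comp (w s k) i c))) has_real_derivative D)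
        (at (w s k $ i))"
      and flow: "((\<lambda>\<tau>. w \<tau> k $ i) has_real_derivative - D) (at s within {0..})"
    using assms unfolding grad_flow_def by blast
  have "D = risk_weight_gradient \<sigma> \<sigma>1 f \<rho> m (a s) (w s) k i"
    using D risk_has_weight_derivative[OF assms(3)] by (rule DERIV_unique)
  with flow show ?thesis by simp
qed

lemma grad_flow_weight_norm_le:
  assumes flow: "grad_flow \<sigma> f \<rho> m a w" and "0 \<le> t0" and "t0 \<le> t" and i: "i \<noteq> j0"
    and Q: "0 \<le> Q" "Q \<le> 1" and small: "\<forall>s\<in>{t0..t}. qmax m (a s) (w s) \<le> Q"
  shows "sqrt (\<Sum>k<m. (w t k $ i)\<^sup>2)
    \<le> sqrt (\<Sum>k<m. (w t0 k $ i)\<^sup>2) + sqrt (real m) * (deviation_constant * (real m * Q^5 + Q^3)) * (t - t0)"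
proof (rule sqrt_sum_squares_growth_le[OF \<open>t0 \<le> t\<close>,
    where D = "\<lambda>s k. risk_weight_gradient \<sigma> \<sigma>1 f \<rho> m (a s) (w s) k i" and A = a])
  fix s k assume s: "s \<in> {t0..t}" and k: "k < m"
  have "s \<ge> 0" using s \<open>0 \<le> t0\<close> by simp
  show "((\<lambda>\<tau>. w \<tau> k $ i) has_real_derivative - risk_weight_gradient \<sigma> \<sigma>1 f \<rho> m (a s) (w s) k i)
      (at s within {t0..t})"
    by (rule DERIV_subset[OF grad_flow_has_weight_derivative[OF flow \<open>s \<ge> 0\<close> k]]) (use \<open>0 \<le> t0\<close> in auto)
  have "qmax m (a s) (w s) \<le> Q" using small s by blast
  then show "\<bar>risk_weight_gradient \<sigma> \<sigma>1 f \<rho> m (a s) (w s) k i - a s k * (\<Sum>l<m. a s l * w s l $ i)\<bar>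
      \<le> deviation_constant * (real m * Q^5 + Q^3)"
    using abs_le_qmax by (intro abs_risk_weight_gradient_sub_le_powers k i Q) (blast intro: order_trans)+
qed

end

theorem lemma2:
  fixes \<rho> f :: "real^'d \<Rightarrow> real"
    and \<sigma> \<sigma>1 \<sigma>2 \<sigma>3 :: "real \<Rightarrow> real"
    and CL \<beta> \<gamma> :: real
    and j0 :: 'd
  assumes dim: "CARD('d) \<ge> 2"
    and rho_meas: "\<rho> \<in> borel_measurable borel"
    and rho_nonneg: "\<And>x. \<rho> x \<ge> 0"
    and rho_int: "integrable lborel \<rho>"
    and rho_prob: "integral\<^sup>L lborel \<rho> = 1"
    and rho_cpt: "compact (closure {x. \<rho> x \<noteq> 0})"
    and rho_second: "\<And>i j. integrable lborel (\<lambda>x. x $ i * x $ j * \<rho> x)"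
    and rho_var: "\<And>i. integral\<^sup>L lborel (\<lambda>x. (x $ i)^2 * \<rho> x) = 1"
    and rho_cov: "\<And>i j. i \<noteq> j \<Longrightarrow> integral\<^sup>L lborel (\<lambda>x. x $ i * x $ j * \<rho> x) = 0"
    and f_meas: "f \<in> borel_measurable borel"
    and f_bdd: "bounded (f ` closure {x. \<rho> x \<noteq> 0})"
    and f_corr: "\<And>j. integral\<^sup>L lborel (\<lambda>x. f x * x $ j * \<rho> x) = (if j = j0 then 1 else 0)"
    and s1: "\<And>z. (\<sigma> has_real_derivative \<sigma>1 z) (at z)"
    and s2: "\<And>z. (\<sigma>1 has_real_derivative \<sigma>2 z) (at z)"
    and s3: "\<And>z. (\<sigma>2 has_real_derivative \<sigma>3 z) (at z)"
    and s0: "\<sigma> 0 = 0" "\<sigma>1 0 = 1" "\<sigma>2 0 = 0"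
    and sL: "\<And>z. \<bar>\<sigma>3 z\<bar> \<le> CL"
    and beta: "\<beta> > 0" and gamma: "\<gamma> > 0"
  shows "\<exists>C>0. \<forall>m::nat. \<forall>a w t0 t i.
           m \<ge> 2
         \<longrightarrow> real m powr (-\<beta>) * ln (real m) powr \<gamma> \<le> 1
         \<longrightarrow> grad_flow \<sigma> f \<rho> m a w
         \<longrightarrow> 0 \<le> t0 \<longrightarrow> t0 \<le> t
         \<longrightarrow> (\<forall>s\<in>{t0..t}. qmax m (a s) (w s) \<le> real m powr (-\<beta>) * ln (real m) powr \<gamma>)
         \<longrightarrow> i \<noteq> j0
         \<longrightarrow> sqrt (\<Sum>k<m. (w t k $ i)^2)
             \<le> sqrt (\<Sum>k<m. (w t0 k $ i)^2)
                + C * max (ln (real m) powr (3*\<gamma>) / real m powr (3*\<beta> - 1/2))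
                          (ln (real m) powr (5*\<gamma>) / real m powr (5*\<beta> - 3/2)) * (t - t0)"
proof -
  obtain B where "\<forall>x\<in>closure {x. \<rho> x \<noteq> 0}. norm x \<le> B"
    using compact_imp_bounded[OF rho_cpt] unfolding bounded_iff ..
  then have B: "\<And>x. \<rho> x \<noteq> 0 \<Longrightarrow> norm x \<le> B"
    using closure_subset[of "{x. \<rho> x \<noteq> 0}"] by auto
  obtain M where "\<forall>y\<in>f ` closure {x. \<rho> x \<noteq> 0}. norm y \<le> M"
    using f_bdd unfolding bounded_iff ..
  then have M: "\<And>x. \<rho> x \<noteq> 0 \<Longrightarrow> \<bar>f x\<bar> \<le> M"
    using closure_subset[of "{x. \<rho> x \<noteq> 0}"] by auto
  interpret risk_model \<sigma> \<sigma>1 \<sigma>2 \<sigma>3 CL \<rho> f j0 B M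
    using assms B M by unfold_locales (auto simp: power2_eq_square)
  show ?thesis
  proof (intro exI[of _ "2 * deviation_constant + 1"] conjI allI impI)
    fix m :: nat and a w t0 t i
    let ?Q = "real m powr (-\<beta>) * ln (real m) powr \<gamma>"
    let ?rate = "max (ln (real m) powr (3*\<gamma>) / real m powr (3*\<beta> - 1/2))
      (ln (real m) powr (5*\<gamma>) / real m powr (5*\<beta> - 3/2))"
    assume "m \<ge> 2" and "?Q \<le> 1" and "grad_flow \<sigma> f \<rho> m a w" and "0 \<le> t0" and "t0 \<le> t"
      and "\<forall>s\<in>{t0..t}. qmax m (a s) (w s) \<le> ?Q" and "i \<noteq> j0"
    then have growth: "sqrt (\<Sum>k<m. (w t k $ i)\<^sup>2) \<le> sqrt (\<Sum>k<m. (w t0 k $ i)\<^sup>2)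
        + sqrt (real m) * (deviation_constant * (real m * ?Q^5 + ?Q^3)) * (t - t0)"
      by (intro grad_flow_weight_norm_le) auto
    have "sqrt (real m) * (deviation_constant * (real m * ?Q^5 + ?Q^3)) \<le> (2 * deviation_constant + 1) * ?rate"
      using \<open>m \<ge> 2\<close> by (intro sqrt_mult_rate_le_max deviation_constant_nonneg) auto
    then have "sqrt (real m) * (deviation_constant * (real m * ?Q^5 + ?Q^3)) * (t - t0)
        \<le> (2 * deviation_constant + 1) * ?rate * (t - t0)"
      using \<open>t0 \<le> t\<close> by (intro mult_right_mono) auto
    with growth show "sqrt (\<Sum>k<m. (w t k $ i)\<^sup>2)
        \<le> sqrt (\<Sum>k<m. (w t0 k $ i)\<^sup>2) + (2 * deviation_constant + 1) * ?rate * (t - t0)"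
      by linarith
  qed (use deviation_constant_nonneg in linarith)
qed

end
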